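(* Consider computation in the l2-MBQC setting described in the context, where the only correlated resources are independent copies of the bipartite quantum CHSH box. Then reliable computation is possible: there exists a constant $\delta<1/2$ such that for every $n\ge 1$ and every Boolean function $f:\{0,1\}^n\to\{0,1\}$ there is an l2-MBQC procedure using finitely many independent CHSH boxes which, on every input $\vec b\in\{0,1\}^n$, outputs $f(\vec b)$ with probability at least $1-\delta$.
   Context: l2-MBQC ("MBQC with mod-2 linear classical processing"): a classical control computer receives an input string $\vec b=b_1\dots b_n$. It has access to black boxes, each of which receives a one-bit input from the control computer and returns a one-bit output. The control computer is restricted to computing sums modulo 2 of subsets of the input bits, of previously received box outputs, and possibly the constant $1$; each box input (which may depend on earlier box outputs, i.e. adaptively) and the final output of the computation must be such mod-2 affine functions. The bipartite quantum CHSH box consists of two one-bit-in/one-bit-out boxes sharing the two-qubit state $(|00\rangle+|11\rangle)/\sqrt2$: on input $b_0$ the first box measures its qubit in the $Z$ basis if $b_0=0$ and in the $X$ basis if $b_0=1$; on input $b_1$ the second box measures in the eigenbasis of $(Z+X)/\sqrt2$ if $b_1=0$ and of $(X-Z)/\sqrt2$ if $b_1=1$; measurement outcome $+1$ is output as bit $0$ and $-1$ as bit $1$. For every input pair, the mod-2 sum of the two outputs equals $b_0\wedge b_1$ with probability $\cos^2(\pi/8)$. Different copies of the CHSH box are independent. *)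

theory Defs
  imports Complex_Main
begin

text \<open>Mod-2 affine functions of the input bits and of the box outputs.
  Aff c I J denotes  c + sum_{i in I} b_i + sum_{t in J} o_t  (mod 2).\<close>
datatype aff = Aff bool "nat set" "nat set"

fun aff_eval :: "aff \<Rightarrow> bool list \<Rightarrow> bool list \<Rightarrow> bool" where
  "aff_eval (Aff c I J) b os =
     ((c \<noteq> odd (card {i\<in>I. b ! i})) \<noteq> odd (card {t\<in>J. os ! t}))"

fun aff_ok :: "nat \<Rightarrow> nat \<Rightarrow> aff \<Rightarrow> bool" where
  "aff_ok n k (Aff c I J) \<longleftrightarrow> I \<subseteq> {0..<n} \<and> J \<subseteq> {0..<k}"

text \<open>Joint output distribution of one quantum CHSH box:
  chsh_prob x y a c = Pr[outputs (x,y) | inputs (a,c)].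
  Uniform marginals and x xor y = a and c with probability cos^2(pi/8).\<close>
definition chsh_prob :: "bool \<Rightarrow> bool \<Rightarrow> bool \<Rightarrow> bool \<Rightarrow> real" where
  "chsh_prob x y a c =
     (if (x \<noteq> y) = (a \<and> c) then (cos (pi/8))\<^sup>2 / 2 else (sin (pi/8))\<^sup>2 / 2)"

text \<open>The 2m one-bit boxes are queried
  in a fixed temporal order: qtime (j, False) / qtime (j, True) is the time step
  at which the first / second half of CHSH box j is queried. inp t is the affine
  function giving the box input at time step t (it may use input bits and
  outputs of earlier time steps only); outp is the final affine output.\<close>
record l2proc =
  nboxes :: nat
  qtime :: "nat \<times> bool \<Rightarrow> nat"
  inp :: "nat \<Rightarrow> aff"
  outp :: aff

definition l2proc_wf :: "nat \<Rightarrow> l2proc \<Rightarrow> bool" where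
  "l2proc_wf n P \<longleftrightarrow>
     bij_betw (qtime P) ({0..<nboxes P} \<times> UNIV) {0..<2 * nboxes P} \<and>
     (\<forall>t < 2 * nboxes P. aff_ok n t (inp P t)) \<and>
     aff_ok n (2 * nboxes P) (outp P)"

text \<open>Probability of the output transcript os (os ! t = output at time t) on input b.
  By non-signalling of the boxes, the sequential adaptive process yields the product
  over boxes of the joint CHSH distribution at the (adaptively chosen) inputs.\<close>
definition transcript_prob :: "l2proc \<Rightarrow> bool list \<Rightarrow> bool list \<Rightarrow> real" where
  "transcript_prob P b os =
     (\<Prod>j<nboxes P.
        chsh_prob (os ! qtime P (j, False)) (os ! qtime P (j, True))
                  (aff_eval (inp P (qtime P (j, False))) b os)
                  (aff_eval (inp P (qtime P (j, True))) b os))"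

definition output_prob :: "l2proc \<Rightarrow> bool list \<Rightarrow> bool \<Rightarrow> real" where
  "output_prob P b v =
     (\<Sum>os\<in>{os. length os = 2 * nboxes P \<and> aff_eval (outp P) b os = v}. transcript_prob P b os)"

end

theory Submission
  imports Defs
begin

(* A CHSH box is a noisy AND gate: fed x and y, the parity of its two outputs is x \<and> y, flipped
   independently with probability sin^2(pi/8); every XOR is free in l2-MBQC. Writing f as its
   decision tree over the inputs, a multiplexer on b_i made of two noisy ANDs halves the bias
   (the expectation of (-1)^output), so the tree computes f with bias 2^-n towards f b. A single
   further box turns three independent copies into a noisy majority, since
   maj(u1, u2, u3) = u2 \<oplus> ((u1 \<oplus> u2) \<and> (u2 \<oplus> u3)); this maps bias x to (sqrt 2 / 4)(3x - x^3),
   which grows geometrically while x \<le> 1/5. Iterating it reaches bias 1/5, i.e. error at most 2/5. *)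

datatype circuit = Input nat | Const bool | Xor circuit circuit | Maj circuit circuit circuit

fun num_boxes :: "circuit \<Rightarrow> nat" where
  "num_boxes (Input i) = 0"
| "num_boxes (Const c) = 0"
| "num_boxes (Xor t1 t2) = num_boxes t1 + num_boxes t2"
| "num_boxes (Maj t1 t2 t3) = Suc (num_boxes t1 + num_boxes t2 + num_boxes t3)"

fun inputs :: "circuit \<Rightarrow> nat set" where
  "inputs (Input i) = {i}"
| "inputs (Const c) = {}"
| "inputs (Xor t1 t2) = inputs t1 \<union> inputs t2"
| "inputs (Maj t1 t2 t3) = inputs t1 \<union> inputs t2 \<union> inputs t3"

fun aff_xor :: "aff \<Rightarrow> aff \<Rightarrow> aff" where
  "aff_xor (Aff c I J) (Aff d K L) = Aff (c \<noteq> d) (sym_diff I K) (sym_diff J L)"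

definition box_parity :: "nat \<Rightarrow> aff" where
  "box_parity k = Aff False {} {2 * k, Suc (2 * k)}"

lemma odd_card_sym_diff:
  assumes "finite A" "finite B"
  shows "odd (card (sym_diff A B)) \<longleftrightarrow> odd (card A) \<noteq> odd (card B)"
proof -
  have "card (sym_diff A B) = card (A - B) + card (B - A)"
    using assms by (intro card_Un_disjoint) auto
  moreover have "card A = card (A \<inter> B) + card (A - B)" "card B = card (A \<inter> B) + card (B - A)"
    using assms card_Int_Diff[of A B] card_Int_Diff[of B A] by (auto simp: Int_commute)
  ultimately show ?thesis by presburger
qed

lemma aff_ok_mono: "aff_ok n k A \<Longrightarrow> k \<le> k' \<Longrightarrow> aff_ok n k' A"
  by (cases A) auto

lemma aff_ok_xor: "aff_ok n k A \<Longrightarrow> aff_ok n k B \<Longrightarrow> aff_ok n k (aff_xor A B)"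
  by (cases A; cases B) auto

lemma aff_ok_box_parity: "Suc (2 * j) < k \<Longrightarrow> aff_ok n k (box_parity j)"
  by (simp add: box_parity_def)

lemma aff_eval_xor:
  assumes "aff_ok n k A" "aff_ok n k B"
  shows "aff_eval (aff_xor A B) b os \<longleftrightarrow> aff_eval A b os \<noteq> aff_eval B b os"
proof (cases A; cases B)
  fix c I J d K L assume A: "A = Aff c I J" and B: "B = Aff d K L"
  have fin: "finite I" "finite J" "finite K" "finite L"
    using assms A B finite_subset by auto
  have "{i \<in> sym_diff I K. b ! i} = sym_diff {i \<in> I. b ! i} {i \<in> K. b ! i}"
       "{t \<in> sym_diff J L. os ! t} = sym_diff {t \<in> J. os ! t} {t \<in> L. os ! t}"
    by auto
  then show ?thesis
    using A B fin by (auto simp: odd_card_sym_diff)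
qed

lemma aff_eval_box_parity: "aff_eval (box_parity j) b os \<longleftrightarrow> os ! (2 * j) \<noteq> os ! Suc (2 * j)"
proof -
  have "{t \<in> {2 * j, Suc (2 * j)}. os ! t} =
      (if os ! (2 * j) then {2 * j} else {}) \<union> (if os ! Suc (2 * j) then {Suc (2 * j)} else {})"
    by auto
  then show ?thesis by (simp add: box_parity_def)
qed

lemma aff_eval_input: "aff_eval (Aff False {i} {}) b os = b ! i"
  by (simp add: Collect_conv_if)

lemma aff_eval_transcript_append:
  assumes "aff_ok n k A" "k \<le> length os"
  shows "aff_eval A b (os @ s) = aff_eval A b os"
proof (cases A)
  case (Aff c I J)
  then have "{t \<in> J. (os @ s) ! t} = {t \<in> J. os ! t}"
    using assms by (auto simp: nth_append)
  then show ?thesis using Aff by simp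
qed

(* Compilation of t when the boxes 0, ..., a - 1 are already in use: the boxes of t are numbered
   from a on in postorder, and box k writes the transcript positions 2k and 2k + 1. *)
fun out_form :: "nat \<Rightarrow> circuit \<Rightarrow> aff" where
  "out_form a (Input i) = Aff False {i} {}"
| "out_form a (Const c) = Aff c {} {}"
| "out_form a (Xor t1 t2) = aff_xor (out_form a t1) (out_form (a + num_boxes t1) t2)"
| "out_form a (Maj t1 t2 t3) = aff_xor (out_form (a + num_boxes t1) t2)
     (box_parity (a + num_boxes t1 + num_boxes t2 + num_boxes t3))"

fun box_forms :: "nat \<Rightarrow> circuit \<Rightarrow> (aff \<times> aff) list" where
  "box_forms a (Input i) = []"
| "box_forms a (Const c) = []"
| "box_forms a (Xor t1 t2) = box_forms a t1 @ box_forms (a + num_boxes t1) t2"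
| "box_forms a (Maj t1 t2 t3) =
     box_forms a t1 @ box_forms (a + num_boxes t1) t2 @ box_forms (a + num_boxes t1 + num_boxes t2) t3 @
     [(aff_xor (out_form a t1) (out_form (a + num_boxes t1) t2),
       aff_xor (out_form (a + num_boxes t1) t2) (out_form (a + num_boxes t1 + num_boxes t2) t3))]"

lemma length_box_forms [simp]: "length (box_forms a t) = num_boxes t"
  by (induction t arbitrary: a) auto

lemma aff_ok_out_form: "inputs t \<subseteq> {0..<n} \<Longrightarrow> aff_ok n (2 * (a + num_boxes t)) (out_form a t)"
proof (induction t arbitrary: a)
  case (Xor t1 t2)
  have "aff_ok n (2 * (a + num_boxes t1)) (out_form a t1)"
       "aff_ok n (2 * (a + num_boxes t1 + num_boxes t2)) (out_form (a + num_boxes t1) t2)"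
    using Xor.IH(1)[of a] Xor.IH(2)[of "a + num_boxes t1"] Xor.prems by (auto simp: algebra_simps)
  then show ?case
    by (auto simp: add.assoc intro!: aff_ok_xor elim: aff_ok_mono)
next
  case (Maj t1 t2 t3)
  have "aff_ok n (2 * (a + num_boxes t1 + num_boxes t2)) (out_form (a + num_boxes t1) t2)"
    using Maj.IH(2)[of "a + num_boxes t1"] Maj.prems by (auto simp: algebra_simps)
  then show ?case
    by (auto intro!: aff_ok_xor aff_ok_box_parity elim: aff_ok_mono)
qed auto

fun causal_forms :: "nat \<Rightarrow> nat \<Rightarrow> (aff \<times> aff) list \<Rightarrow> bool" where
  "causal_forms n a [] = True"
| "causal_forms n a ((x, y) # bs) \<longleftrightarrow>
     aff_ok n (2 * a) x \<and> aff_ok n (2 * a) y \<and> causal_forms n (Suc a) bs"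

lemma causal_forms_append:
  "causal_forms n a (bs @ cs) \<longleftrightarrow> causal_forms n a bs \<and> causal_forms n (a + length bs) cs"
  by (induction bs arbitrary: a) auto

lemma causal_forms_nth:
  "causal_forms n a bs \<Longrightarrow> j < length bs \<Longrightarrow>
     aff_ok n (2 * (a + j)) (fst (bs ! j)) \<and> aff_ok n (2 * (a + j)) (snd (bs ! j))"
proof (induction bs arbitrary: a j)
  case (Cons xy bs)
  then show ?case
    using Cons.IH[of "Suc a" "j - 1"] by (cases xy; cases j) auto
qed simp

lemma causal_box_forms: "inputs t \<subseteq> {0..<n} \<Longrightarrow> causal_forms n a (box_forms a t)"
proof (induction t arbitrary: a)
  case (Maj t1 t2 t3)
  then show ?case
    using aff_ok_out_form[of t1 n a] aff_ok_out_form[of t2 n "a + num_boxes t1"]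
      aff_ok_out_form[of t3 n "a + num_boxes t1 + num_boxes t2"]
    by (auto simp: causal_forms_append add.assoc intro!: aff_ok_xor intro: aff_ok_mono)
qed (auto simp: causal_forms_append)

lemma aff_eval_out_form_append:
  "inputs t \<subseteq> {0..<n} \<Longrightarrow> 2 * (a + num_boxes t) \<le> length p \<Longrightarrow>
     aff_eval (out_form a t) b (p @ w) = aff_eval (out_form a t) b p"
  using aff_eval_transcript_append[OF aff_ok_out_form] .

fun weight :: "nat \<Rightarrow> (aff \<times> aff) list \<Rightarrow> bool list \<Rightarrow> bool list \<Rightarrow> real" where
  "weight a [] b os = 1"
| "weight a ((x, y) # bs) b os =
     chsh_prob (os ! (2 * a)) (os ! Suc (2 * a)) (aff_eval x b os) (aff_eval y b os) * weight (Suc a) bs b os"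

lemma weight_append: "weight a (bs @ cs) b os = weight a bs b os * weight (a + length bs) cs b os"
  by (induction bs arbitrary: a) auto

lemma weight_eq_prod:
  "weight a bs b os = (\<Prod>j<length bs.
     chsh_prob (os ! (2 * (a + j))) (os ! Suc (2 * (a + j))) (aff_eval (fst (bs ! j)) b os) (aff_eval (snd (bs ! j)) b os))"
proof (induction bs arbitrary: a)
  case (Cons xy bs)
  obtain x y where xy: "xy = (x, y)" by fastforce
  have "weight (Suc a) bs b os = (\<Prod>j<length bs. chsh_prob (os ! (2 * (a + Suc j))) (os ! Suc (2 * (a + Suc j)))
      (aff_eval (fst (bs ! j)) b os) (aff_eval (snd (bs ! j)) b os))"
    using Cons.IH[of "Suc a"] by simp
  then show ?case by (simp add: xy prod.lessThan_Suc_shift del: prod.lessThan_Suc)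
qed simp

lemma weight_transcript_append:
  "causal_forms n a bs \<Longrightarrow> 2 * (a + length bs) \<le> length os \<Longrightarrow>
     weight a bs b (os @ s) = weight a bs b os"
  by (induction bs arbitrary: a) (auto simp: nth_append aff_eval_transcript_append)

lemma sum_lists_length_add:
  "(\<Sum>w | length w = m + k. F w) = (\<Sum>w1 | length w1 = m. \<Sum>w2 | length w2 = k. F (w1 @ w2))"
proof -
  have "(\<Sum>w1 | length w1 = m. \<Sum>w2 | length w2 = k. F (w1 @ w2)) =
      (\<Sum>(w1, w2) \<in> {w1. length w1 = m} \<times> {w2. length w2 = k}. F (w1 @ w2))"
    by (rule sum.cartesian_product)
  also have "\<dots> = (\<Sum>w | length w = m + k. F w)"
    by (rule sum.reindex_bij_witness[where i = "\<lambda>w. (take m w, drop m w)" and j = "\<lambda>(w1, w2). w1 @ w2"])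
      auto
  finally show ?thesis ..
qed

definition transcript_sum ::
    "nat \<Rightarrow> (aff \<times> aff) list \<Rightarrow> bool list \<Rightarrow> bool list \<Rightarrow> (bool list \<Rightarrow> real) \<Rightarrow> real" where
  "transcript_sum a bs b pre F = (\<Sum>w | length w = 2 * length bs. weight a bs b (pre @ w) * F (pre @ w))"

lemma transcript_sum_Nil [simp]: "transcript_sum a [] b pre F = F pre"
  by (simp add: transcript_sum_def)

lemma transcript_sum_cong:
  "(\<And>w. length w = 2 * length bs \<Longrightarrow> F (pre @ w) = G (pre @ w)) \<Longrightarrow>
     transcript_sum a bs b pre F = transcript_sum a bs b pre G"
  unfolding transcript_sum_def by (rule sum.cong) auto

lemma transcript_sum_append:
  assumes "causal_forms n a bs" "length pre = 2 * a"
  shows "transcript_sum a (bs @ cs) b pre F =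
           transcript_sum a bs b pre (\<lambda>p. transcript_sum (a + length bs) cs b p F)"
proof -
  have "weight a (bs @ cs) b (pre @ w1 @ w2) = weight a bs b (pre @ w1) * weight (a + length bs) cs b (pre @ w1 @ w2)"
    if "length w1 = 2 * length bs" for w1 w2
    using that assms weight_transcript_append[of n a bs "pre @ w1" b w2] by (simp add: weight_append)
  then show ?thesis
    unfolding transcript_sum_def
    by (simp add: sum_lists_length_add sum_distrib_left mult.assoc)
qed

definition noisy :: "bool \<Rightarrow> (bool \<Rightarrow> real) \<Rightarrow> real" where
  "noisy z g = (cos (pi / 8))\<^sup>2 * g z + (sin (pi / 8))\<^sup>2 * g (\<not> z)"

lemma lists_length_2: "{w :: bool list. length w = 2} = {[False, False], [False, True], [True, False], [True, True]}"
proof -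
  have "length w = 2 \<longleftrightarrow> (\<exists>x y. w = [x, y])" for w :: "bool list"
    by (auto simp: numeral_2_eq_2 length_Suc_conv)
  then show ?thesis by auto
qed

lemma transcript_sum_box:
  assumes "aff_ok n (2 * a) x" "aff_ok n (2 * a) y" "length p = 2 * a"
  shows "transcript_sum a [(x, y)] b p (\<lambda>q. G (aff_eval (box_parity a) b q)) =
           noisy (aff_eval x b p \<and> aff_eval y b p) G"
proof -
  let ?X = "aff_eval x b p" and ?Y = "aff_eval y b p"
  have "transcript_sum a [(x, y)] b p (\<lambda>q. G (aff_eval (box_parity a) b q)) =
      (\<Sum>w | length w = 2. chsh_prob (w ! 0) (w ! 1) ?X ?Y * G (w ! 0 \<noteq> w ! 1))"
    unfolding transcript_sum_def using assms
    by (intro sum.cong) (simp_all add: aff_eval_transcript_append aff_eval_box_parity nth_append)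
  also have "\<dots> = noisy (?X \<and> ?Y) G"
    by (cases "?X \<and> ?Y") (auto simp: lists_length_2 chsh_prob_def noisy_def)
  finally show ?thesis .
qed

lemma transcript_sum_maj_box:
  fixes b p :: "bool list"
  assumes "aff_ok n (2 * k) A1" "aff_ok n (2 * k) A2" "aff_ok n (2 * k) A3" "length p = 2 * k"
  defines "e \<equiv> \<lambda>A. aff_eval A b p"
  shows "transcript_sum k [(aff_xor A1 A2, aff_xor A2 A3)] b p
           (\<lambda>q. g (aff_eval A2 b q \<noteq> aff_eval (box_parity k) b q)) =
         noisy ((e A1 \<noteq> e A2) \<and> (e A2 \<noteq> e A3)) (\<lambda>v. g (e A2 \<noteq> v))"
proof -
  have "transcript_sum k [(aff_xor A1 A2, aff_xor A2 A3)] b p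
      (\<lambda>q. g (aff_eval A2 b q \<noteq> aff_eval (box_parity k) b q)) =
      transcript_sum k [(aff_xor A1 A2, aff_xor A2 A3)] b p (\<lambda>q. g (e A2 \<noteq> aff_eval (box_parity k) b q))"
    using assms aff_eval_transcript_append[OF assms(2)] by (intro transcript_sum_cong) simp
  also have "\<dots> = noisy (e (aff_xor A1 A2) \<and> e (aff_xor A2 A3)) (\<lambda>v. g (e A2 \<noteq> v))"
    unfolding e_def using transcript_sum_box[OF aff_ok_xor[OF assms(1,2)] aff_ok_xor[OF assms(2,3)] assms(4)] .
  finally show ?thesis
    by (simp add: e_def aff_eval_xor[OF assms(1,2)] aff_eval_xor[OF assms(2,3)])
qed

fun expect :: "circuit \<Rightarrow> bool list \<Rightarrow> (bool \<Rightarrow> real) \<Rightarrow> real" where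
  "expect (Input i) b g = g (b ! i)"
| "expect (Const c) b g = g c"
| "expect (Xor t1 t2) b g = expect t1 b (\<lambda>u1. expect t2 b (\<lambda>u2. g (u1 \<noteq> u2)))"
| "expect (Maj t1 t2 t3) b g = expect t1 b (\<lambda>u1. expect t2 b (\<lambda>u2. expect t3 b (\<lambda>u3.
     noisy ((u1 \<noteq> u2) \<and> (u2 \<noteq> u3)) (\<lambda>v. g (u2 \<noteq> v)))))"

lemma transcript_sum_circuit_append:
  assumes circuit: "\<And>g. transcript_sum a (box_forms a t) b pre (\<lambda>q. g (aff_eval (out_form a t) b q)) =
      expect t b g"
    and causal: "causal_forms n a (box_forms a t)" and len: "length pre = 2 * a"
    and rest: "\<And>w. length w = 2 * num_boxes t \<Longrightarrow>
      transcript_sum (a + num_boxes t) cs b (pre @ w) F = H (aff_eval (out_form a t) b (pre @ w))"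
  shows "transcript_sum a (box_forms a t @ cs) b pre F = expect t b H"
proof -
  have "transcript_sum a (box_forms a t @ cs) b pre F =
      transcript_sum a (box_forms a t) b pre (\<lambda>p. transcript_sum (a + num_boxes t) cs b p F)"
    by (simp add: transcript_sum_append[OF causal len])
  also have "\<dots> = transcript_sum a (box_forms a t) b pre (\<lambda>q. H (aff_eval (out_form a t) b q))"
    by (rule transcript_sum_cong) (simp add: rest)
  also have "\<dots> = expect t b H"
    by (rule circuit)
  finally show ?thesis .
qed

lemma transcript_sum_compile:
  assumes "inputs t \<subseteq> {0..<n}" "length pre = 2 * a"
  shows "transcript_sum a (box_forms a t) b pre (\<lambda>p. g (aff_eval (out_form a t) b p)) = expect t b g"
  using assms
proof (induction t arbitrary: a pre g)
  case (Input i)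
  then show ?case by (simp add: aff_eval_input del: aff_eval.simps)
next
  case (Const c)
  then show ?case by simp
next
  case (Xor t1 t2)
  let ?a2 = "a + num_boxes t1"
  let ?e1 = "aff_eval (out_form a t1) b" and ?e2 = "aff_eval (out_form ?a2 t2) b"
  let ?F = "\<lambda>p. g (?e1 p \<noteq> ?e2 p)"
  have in1: "inputs t1 \<subseteq> {0..<n}" and in2: "inputs t2 \<subseteq> {0..<n}" using Xor.prems by auto
  have ok1: "aff_ok n (2 * ?a2) (out_form a t1)"
    using aff_ok_out_form[OF in1] .
  have ok2: "aff_ok n (2 * (a + num_boxes (Xor t1 t2))) (out_form ?a2 t2)"
    using aff_ok_out_form[OF in2, of ?a2] by (simp add: add.assoc)
  have step2: "transcript_sum ?a2 (box_forms ?a2 t2) b p ?F = expect t2 b (\<lambda>u2. g (?e1 p \<noteq> u2))"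
    if "length p = 2 * ?a2" for p
    using transcript_sum_circuit_append[OF Xor.IH(2)[OF in2 that] causal_box_forms[OF in2] that, of "[]"]
      that aff_eval_out_form_append[OF in1] by simp
  have "transcript_sum a (box_forms a t1 @ box_forms ?a2 t2) b pre ?F = expect (Xor t1 t2) b g"
    using Xor.prems step2
    by (auto intro: transcript_sum_circuit_append[OF Xor.IH(1)[OF in1 Xor.prems(2)] causal_box_forms[OF in1]])
  moreover have "aff_eval (out_form a (Xor t1 t2)) b p \<longleftrightarrow> ?e1 p \<noteq> ?e2 p" for p
    using aff_eval_xor[OF aff_ok_mono[OF ok1] ok2] by simp
  ultimately show ?case by simp
next
  case (Maj t1 t2 t3)
  let ?a2 = "a + num_boxes t1"
  let ?a3 = "?a2 + num_boxes t2"
  let ?k = "?a3 + num_boxes t3"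
  let ?e1 = "aff_eval (out_form a t1) b" and ?e2 = "aff_eval (out_form ?a2 t2) b"
  let ?x = "aff_xor (out_form a t1) (out_form ?a2 t2)"
    and ?y = "aff_xor (out_form ?a2 t2) (out_form ?a3 t3)"
  let ?F = "\<lambda>p. g (?e2 p \<noteq> aff_eval (box_parity ?k) b p)"
  let ?G = "\<lambda>u1 u2 u3. noisy ((u1 \<noteq> u2) \<and> (u2 \<noteq> u3)) (\<lambda>v. g (u2 \<noteq> v))"
  have in1: "inputs t1 \<subseteq> {0..<n}" and in2: "inputs t2 \<subseteq> {0..<n}" and in3: "inputs t3 \<subseteq> {0..<n}"
    using Maj.prems by auto
  have ok1: "aff_ok n (2 * ?k) (out_form a t1)"
    using aff_ok_mono[OF aff_ok_out_form[OF in1, of a]] by simp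
  have ok2: "aff_ok n (2 * ?k) (out_form ?a2 t2)"
    using aff_ok_mono[OF aff_ok_out_form[OF in2, of ?a2]] by simp
  have ok3: "aff_ok n (2 * ?k) (out_form ?a3 t3)"
    using aff_ok_out_form[OF in3, of ?a3] by simp
  have step3: "transcript_sum ?a3 (box_forms ?a3 t3 @ [(?x, ?y)]) b p ?F = expect t3 b (?G (?e1 p) (?e2 p))"
    if "length p = 2 * ?a3" for p
    using that transcript_sum_maj_box[OF ok1 ok2 ok3] aff_eval_out_form_append[OF in1] aff_eval_out_form_append[OF in2]
    by (intro transcript_sum_circuit_append[OF Maj.IH(3)[OF in3 that] causal_box_forms[OF in3] that])
      (simp add: add.assoc)
  have step2: "transcript_sum ?a2 (box_forms ?a2 t2 @ box_forms ?a3 t3 @ [(?x, ?y)]) b p ?F =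
      expect t2 b (\<lambda>u2. expect t3 b (?G (?e1 p) u2))" if "length p = 2 * ?a2" for p
    using that step3 aff_eval_out_form_append[OF in1]
    by (intro transcript_sum_circuit_append[OF Maj.IH(2)[OF in2 that] causal_box_forms[OF in2] that]) simp
  have "transcript_sum a (box_forms a t1 @ box_forms ?a2 t2 @ box_forms ?a3 t3 @ [(?x, ?y)]) b pre ?F =
      expect (Maj t1 t2 t3) b g"
    using Maj.prems step2
    by (auto intro: transcript_sum_circuit_append[OF Maj.IH(1)[OF in1 Maj.prems(2)] causal_box_forms[OF in1]])
  moreover have "aff_eval (out_form a (Maj t1 t2 t3)) b p \<longleftrightarrow> ?e2 p \<noteq> aff_eval (box_parity ?k) b p" for p
    using aff_eval_xor[OF aff_ok_mono[OF ok2] aff_ok_box_parity[of ?k "2 * Suc ?k"]] by simp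
  ultimately show ?case by simp
qed

definition spin :: "bool \<Rightarrow> real" where
  "spin u = (if u then -1 else 1)"

definition bias :: "circuit \<Rightarrow> bool list \<Rightarrow> real" where
  "bias t b = expect t b spin"

lemma cos_pi_div_8_sq: "(cos (pi / 8))\<^sup>2 = (1 + sqrt 2 / 2) / 2"
  using cos_double_cos[of "pi / 8"] by (simp add: cos_45 field_simps)

lemma sin_pi_div_8_sq: "(sin (pi / 8))\<^sup>2 = (1 - sqrt 2 / 2) / 2"
  using cos_pi_div_8_sq by (simp add: sin_squared_eq)

lemma noisy_affine: "noisy z (\<lambda>u. x + y * g u) = x + y * noisy z g"
  using sin_cos_squared_add[of "pi / 8"] unfolding noisy_def by algebra

lemma expect_affine: "expect t b (\<lambda>u. x + y * g u) = x + y * expect t b g"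
  by (induction t arbitrary: x y g) (simp_all add: noisy_affine)

lemma expect_eq_bias: "expect t b g = (g False + g True) / 2 + (g False - g True) / 2 * bias t b"
proof -
  have "g = (\<lambda>u. (g False + g True) / 2 + (g False - g True) / 2 * spin u)"
    by (auto simp: spin_def field_simps)
  then have "expect t b g = expect t b (\<lambda>u. (g False + g True) / 2 + (g False - g True) / 2 * spin u)"
    by simp
  then show ?thesis by (simp only: expect_affine bias_def)
qed

lemma bias_Input [simp]: "bias (Input i) b = spin (b ! i)"
  by (simp add: bias_def)

lemma bias_Const [simp]: "bias (Const c) b = spin c"
  by (simp add: bias_def)

lemma bias_Xor: "bias (Xor t1 t2) b = bias t1 b * bias t2 b"
  by (simp add: bias_def[of "Xor t1 t2"] expect_eq_bias[of t1] expect_eq_bias[of t2] spin_def)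

lemma bias_Maj:
  "bias (Maj t1 t2 t3) b = sqrt 2 / 4 * (bias t1 b + bias t2 b + bias t3 b - bias t1 b * bias t2 b * bias t3 b)"
  by (simp add: bias_def[of "Maj t1 t2 t3"] expect_eq_bias[of t1] expect_eq_bias[of t2] expect_eq_bias[of t3]
      noisy_def cos_pi_div_8_sq sin_pi_div_8_sq spin_def field_simps)

definition not_gate :: "circuit \<Rightarrow> circuit" where
  "not_gate t = Xor t (Const True)"

definition and_gate :: "circuit \<Rightarrow> circuit \<Rightarrow> circuit" where
  "and_gate t1 t2 = Maj t1 (Const False) t2"

definition select :: "nat \<Rightarrow> circuit \<Rightarrow> circuit \<Rightarrow> circuit" where
  "select i t1 t0 = Xor (and_gate (Input i) t1) (and_gate (not_gate (Input i)) t0)"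

lemma bias_select: "bias (select i t1 t0) b = (if b ! i then bias t1 b else bias t0 b) / 2"
  by (cases "b ! i") (simp_all add: select_def and_gate_def not_gate_def bias_Xor bias_Maj spin_def algebra_simps)

lemma inputs_select [simp]: "inputs (select i t1 t0) = insert i (inputs t1 \<union> inputs t0)"
  by (auto simp: select_def and_gate_def not_gate_def)

fun decision_circuit :: "(bool list \<Rightarrow> bool) \<Rightarrow> bool list \<Rightarrow> nat \<Rightarrow> circuit" where
  "decision_circuit f pre 0 = Const (f pre)"
| "decision_circuit f pre (Suc k) =
     select (length pre) (decision_circuit f (pre @ [True]) k) (decision_circuit f (pre @ [False]) k)"

lemma bias_decision_circuit:
  "length s = k \<Longrightarrow> bias (decision_circuit f pre k) (pre @ s) = spin (f (pre @ s)) / 2 ^ k"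
proof (induction k arbitrary: pre s)
  case (Suc k)
  then obtain x s' where s: "s = x # s'" "length s' = k"
    by (auto simp: length_Suc_conv)
  have "bias (decision_circuit f (pre @ [x]) k) (pre @ s) = spin (f (pre @ s)) / 2 ^ k"
    using Suc.IH[OF s(2), of "pre @ [x]"] s(1) by simp
  then show ?case
    using s(1) by (cases x) (simp_all add: bias_select nth_append)
qed simp

lemma inputs_decision_circuit: "inputs (decision_circuit f pre k) \<subseteq> {0..<length pre + k}"
  by (induction k arbitrary: pre) fastforce+

definition maj_bias :: "real \<Rightarrow> real" where
  "maj_bias x = sqrt 2 / 4 * (3 * x - x ^ 3)"

lemma sqrt_2_div_4_bounds: "7 / 20 \<le> sqrt 2 / (4 :: real)" "sqrt 2 / (4 :: real) \<le> 1 / 2"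
proof -
  have "7 / 5 \<le> sqrt (2 :: real)" by (rule real_le_rsqrt) (simp add: power2_eq_square)
  moreover have "sqrt (2 :: real) \<le> 2" by (rule real_le_lsqrt) (simp_all add: power2_eq_square)
  ultimately show "7 / 20 \<le> sqrt 2 / (4 :: real)" "sqrt 2 / (4 :: real) \<le> 1 / 2" by simp_all
qed

lemma maj_bias_grows: assumes "0 \<le> x" "x \<le> 1 / 5" shows "103 / 100 * x \<le> maj_bias x"
proof -
  have "x * x \<le> 1 / 25" using assms mult_mono[of x "1/5" x "1/5"] by simp
  then have "7 / 20 * (74 / 25) \<le> sqrt 2 / 4 * (3 - x * x)"
    using sqrt_2_div_4_bounds by (intro mult_mono) auto
  then have "x * (103 / 100) \<le> x * (sqrt 2 / 4 * (3 - x * x))"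
    using assms(1) by (intro mult_left_mono) auto
  then show ?thesis unfolding maj_bias_def by (simp add: power3_eq_cube algebra_simps)
qed

lemma maj_bias_stays_above: assumes "1 / 5 \<le> x" "x \<le> 1" shows "1 / 5 \<le> maj_bias x"
proof -
  have "x * x \<le> 1" using assms mult_mono[of x 1 x 1] by simp
  then have "0 \<le> (x - 1 / 5) * (74 / 25 - x * x - x / 5)" using assms by simp
  moreover have "(x - 1 / 5) * (74 / 25 - x * x - x / 5) = 3 * x - x ^ 3 - 74 / 125"
    by (simp add: power3_eq_cube field_simps)
  ultimately have "74 / 125 \<le> 3 * x - x ^ 3" by simp
  then have "7 / 20 * (74 / 125) \<le> sqrt 2 / 4 * (3 * x - x ^ 3)"
    using sqrt_2_div_4_bounds by (intro mult_mono) auto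
  then show ?thesis unfolding maj_bias_def by simp
qed

lemma maj_bias_unit_interval: assumes "0 \<le> x" "x \<le> 1" shows "0 \<le> maj_bias x \<and> maj_bias x \<le> 1"
proof -
  have "x * x * x \<le> x" using assms mult_mono[of x 1 x 1] mult_right_mono[of "x * x" 1 x] by simp
  then have "0 \<le> 3 * x - x ^ 3" using assms by (simp add: power3_eq_cube)
  moreover have "3 * x - x ^ 3 \<le> 2"
  proof -
    have "0 \<le> (x - 1) * (x - 1) * (x + 2)" using assms by simp
    then show ?thesis by (simp add: power3_eq_cube algebra_simps)
  qed
  ultimately have "0 \<le> sqrt 2 / 4 * (3 * x - x ^ 3)" "sqrt 2 / 4 * (3 * x - x ^ 3) \<le> 1 / 2 * 2"
    using sqrt_2_div_4_bounds mult_mono[of "sqrt 2 / 4" "1 / 2" "3 * x - x ^ 3" 2] by auto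
  then show ?thesis unfolding maj_bias_def by simp
qed

lemma maj_bias_iterate_lower:
  assumes "0 < c" "c \<le> 1"
  shows "0 \<le> (maj_bias ^^ r) c \<and> (maj_bias ^^ r) c \<le> 1 \<and>
           min (1 / 5) ((103 / 100) ^ r * c) \<le> (maj_bias ^^ r) c"
proof (induction r)
  case 0
  then show ?case using assms by simp
next
  case (Suc r)
  let ?y = "(maj_bias ^^ r) c"
  have y: "0 \<le> ?y" "?y \<le> 1" "min (1 / 5) ((103 / 100) ^ r * c) \<le> ?y" using Suc by auto
  have "min (1 / 5) ((103 / 100) ^ Suc r * c) \<le> maj_bias ?y"
  proof (cases "1 / 5 \<le> ?y")
    case True
    then show ?thesis using maj_bias_stays_above[OF True y(2)] by simp
  next
    case False
    then have "(103 / 100) ^ r * c \<le> ?y" using y(3) by (simp add: min_def split: if_splits)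
    then have "103 / 100 * ((103 / 100) ^ r * c) \<le> 103 / 100 * ?y" by (rule mult_left_mono) simp
    also have "\<dots> \<le> maj_bias ?y" using maj_bias_grows[OF y(1)] False by simp
    finally show ?thesis by simp
  qed
  then show ?case using maj_bias_unit_interval[OF y(1,2)] by simp
qed

lemma maj_bias_iterate_reaches: assumes "0 < c" "c \<le> 1" shows "\<exists>r. 1 / 5 \<le> (maj_bias ^^ r) c"
proof -
  obtain r where "1 / (5 * c) < (103 / 100) ^ r"
    using real_arch_pow[of "103 / 100" "1 / (5 * c)"] by auto
  then have "1 / 5 < (103 / 100) ^ r * c" using assms by (simp add: field_simps)
  then show ?thesis using maj_bias_iterate_lower[OF assms, of r] by (auto simp: min_def split: if_splits)
qed

fun amplify :: "nat \<Rightarrow> circuit \<Rightarrow> circuit" where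
  "amplify 0 t = t"
| "amplify (Suc r) t = Maj (amplify r t) (amplify r t) (amplify r t)"

lemma inputs_amplify [simp]: "inputs (amplify r t) = inputs t"
  by (induction r) auto

lemma bias_amplify: "bias t b = spin v * x \<Longrightarrow> bias (amplify r t) b = spin v * (maj_bias ^^ r) x"
  by (induction r) (auto simp: bias_Maj maj_bias_def spin_def power3_eq_cube algebra_simps)

definition circuit_proc :: "circuit \<Rightarrow> l2proc" where
  "circuit_proc t =
     \<lparr>nboxes = num_boxes t,
      qtime = (\<lambda>(j, second). 2 * j + (if second then 1 else 0)),
      inp = (\<lambda>s. (if even s then fst else snd) (box_forms 0 t ! (s div 2))),
      outp = out_form 0 t\<rparr>"

lemma transcript_prob_circuit_proc: "transcript_prob (circuit_proc t) b os = weight 0 (box_forms 0 t) b os"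
  by (simp add: transcript_prob_def weight_eq_prod circuit_proc_def)

lemma output_prob_circuit_proc:
  assumes "inputs t \<subseteq> {0..<n}"
  shows "output_prob (circuit_proc t) b v = (1 + spin v * bias t b) / 2"
proof -
  let ?L = "{os :: bool list. length os = 2 * num_boxes t}"
  let ?P = "\<lambda>os. aff_eval (out_form 0 t) b os = v"
  have "finite ?L"
    using finite_lists_length_eq[of "UNIV :: bool set"] by simp
  have "output_prob (circuit_proc t) b v = (\<Sum>os\<in>{os \<in> ?L. ?P os}. weight 0 (box_forms 0 t) b os)"
    unfolding output_prob_def transcript_prob_circuit_proc by (simp add: circuit_proc_def)
  also have "\<dots> = transcript_sum 0 (box_forms 0 t) b [] (\<lambda>p. if ?P p then 1 else 0)"
    unfolding sum.inter_filter[OF \<open>finite ?L\<close>] transcript_sum_def by (simp add: if_distrib cong: if_cong)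
  also have "\<dots> = expect t b (\<lambda>u. if u = v then 1 else 0)"
    using transcript_sum_compile[OF assms, where pre = "[]" and a = 0 and g = "\<lambda>u. if u = v then 1 else 0"]
    by simp
  finally show ?thesis
    by (simp add: expect_eq_bias spin_def)
qed

lemma l2proc_wf_circuit_proc:
  assumes "inputs t \<subseteq> {0..<n}"
  shows "l2proc_wf n (circuit_proc t)"
proof -
  let ?q = "\<lambda>(j, second). 2 * j + (if second then 1 else 0) :: nat"
  have "bij_betw ?q ({0..<num_boxes t} \<times> UNIV) {0..<2 * num_boxes t}"
    by (rule bij_betw_byWitness[where f' = "\<lambda>s. (s div 2, odd s)"]) auto
  moreover have "aff_ok n s (inp (circuit_proc t) s)" if "s < 2 * num_boxes t" for s
  proof -
    have "aff_ok n (2 * (s div 2)) (fst (box_forms 0 t ! (s div 2))) \<and>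
        aff_ok n (2 * (s div 2)) (snd (box_forms 0 t ! (s div 2)))"
      using causal_forms_nth[OF causal_box_forms[OF assms, of 0], of "s div 2"] that by simp
    then show ?thesis
      by (auto simp: circuit_proc_def elim: aff_ok_mono)
  qed
  moreover have "aff_ok n (2 * num_boxes t) (outp (circuit_proc t))"
    using aff_ok_out_form[OF assms, of 0] by (simp add: circuit_proc_def)
  ultimately show ?thesis
    by (simp add: l2proc_wf_def circuit_proc_def)
qed

theorem mainTheorem1:
  shows "\<exists>\<delta>::real. \<delta> < 1/2 \<and>
           (\<forall>n::nat. n \<ge> 1 \<longrightarrow> (\<forall>f :: bool list \<Rightarrow> bool.
              \<exists>P. l2proc_wf n P \<and>
                  (\<forall>b. length b = n \<longrightarrow> output_prob P b (f b) \<ge> 1 - \<delta>)))"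
proof (intro exI[of _ "2 / 5"] conjI allI impI)
  fix n :: nat and f :: "bool list \<Rightarrow> bool"
  obtain r where r: "1 / 5 \<le> (maj_bias ^^ r) (1 / 2 ^ n)"
    using maj_bias_iterate_reaches[of "1 / 2 ^ n"] by auto
  define t where "t = amplify r (decision_circuit f [] n)"
  have inputs: "inputs t \<subseteq> {0..<n}"
    using inputs_decision_circuit[of f "[]" n] by (simp add: t_def)
  have "1 - 2 / 5 \<le> output_prob (circuit_proc t) b (f b)" if "length b = n" for b
  proof -
    have "bias t b = spin (f b) * (maj_bias ^^ r) (1 / 2 ^ n)"
      using bias_decision_circuit[OF that, of f "[]"] unfolding t_def by (intro bias_amplify) simp
    then show ?thesis
      using r by (simp add: output_prob_circuit_proc[OF inputs] spin_def)
  qed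
  then show "\<exists>P. l2proc_wf n P \<and> (\<forall>b. length b = n \<longrightarrow> 1 - 2 / 5 \<le> output_prob P b (f b))"
    using l2proc_wf_circuit_proc[OF inputs] by blast
qed simp

end
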